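(* Let $H$ and $G$ be finitely generated groups with $H<G$. Suppose some connected component of $\Gamma_m(H)$ has exponential growth, and let $S\in\Gamma_n(G)$ be a generating $n$-tuple of $G$. Then $\Gamma_{n+m}(G,S)$ has exponential growth. In particular, if $H<G$ and $H$ has exponential Nielsen growth, then $G$ also has exponential Nielsen growth.
   Context: For a group $G$, a generating $n$-tuple is $(g_1,\dots,g_n)\in G^n$ with $G=\langle g_1,\dots,g_n\rangle$. The product replacement graph $\Gamma_n(G)$ has vertices the generating $n$-tuples, with edges from $(g_1,\dots,g_n)$ to each tuple obtained by replacing $g_j$ by $g_jg_i^{\pm1}$ or $g_i^{\pm1}g_j$, for every ordered pair $i\neq j$. For $S=(g_1,\dots,g_n)\in\Gamma_n(G)$ and $m\ge0$, $S^{(m)}=(g_1,\dots,g_n,1,\dots,1)\in\Gamma_{n+m}(G)$ ($m$ trailing identities) and $\Gamma_{n+m}(G,S)$ is the connected component of $\Gamma_{n+m}(G)$ containing $S^{(m)}$. For a graph $\Gamma$ and vertex $v$, $B_\Gamma(v,r)$ is the set of vertices at path distance at most $r$ from $v$; a graph has exponential growth from $v$ if $|B_\Gamma(v,r)|\ge\alpha^r$ for some $\alpha>1$ and all sufficiently large $r$; a connected graph has exponential growth if it has exponential growth from some (equivalently every) vertex. $G$ has exponential Nielsen growth if $\Gamma_n(G,S)$ has exponential growth for some $n$ and some generating $n$-tuple $S$. *)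

theory Defs
  imports "HOL-Algebra.Algebra"
begin

definition fin_gen :: "('a, 'b) monoid_scheme \<Rightarrow> bool" where
  "fin_gen G \<longleftrightarrow> (\<exists>A. finite A \<and> A \<subseteq> carrier G \<and> generate G A = carrier G)"

definition gen_tuples :: "('a, 'b) monoid_scheme \<Rightarrow> nat \<Rightarrow> 'a list set" where
  "gen_tuples G n = {xs. length xs = n \<and> set xs \<subseteq> carrier G \<and> generate G (set xs) = carrier G}"

definition pr_edges :: "('a, 'b) monoid_scheme \<Rightarrow> nat \<Rightarrow> ('a list \<times> 'a list) set" where
  "pr_edges G n = {(xs, ys). xs \<in> gen_tuples G n \<and> ys \<in> gen_tuples G n \<and>
     (\<exists>i<n. \<exists>j<n. i \<noteq> j \<and>
        (ys = xs[j := xs ! j \<otimes>\<^bsub>G\<^esub> xs ! i] \<or>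
         ys = xs[j := xs ! j \<otimes>\<^bsub>G\<^esub> inv\<^bsub>G\<^esub> (xs ! i)] \<or>
         ys = xs[j := xs ! i \<otimes>\<^bsub>G\<^esub> xs ! j] \<or>
         ys = xs[j := inv\<^bsub>G\<^esub> (xs ! i) \<otimes>\<^bsub>G\<^esub> xs ! j]))}"

definition ball_graph :: "('v \<times> 'v) set \<Rightarrow> 'v \<Rightarrow> nat \<Rightarrow> 'v set" where
  "ball_graph E v r = {w. \<exists>k\<le>r. (v, w) \<in> E ^^ k}"

definition exp_growth_from :: "('v \<times> 'v) set \<Rightarrow> 'v \<Rightarrow> bool" where
  "exp_growth_from E v \<longleftrightarrow>
     (\<exists>\<alpha>::real. \<alpha> > 1 \<and> (\<exists>R. \<forall>r\<ge>R. \<alpha> ^ r \<le> real (card (ball_graph E v r))))"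

definition component :: "('v \<times> 'v) set \<Rightarrow> 'v \<Rightarrow> 'v set" where
  "component E v = {w. (v, w) \<in> E\<^sup>*}"

definition comp_exp_growth :: "('v \<times> 'v) set \<Rightarrow> 'v set \<Rightarrow> bool" where
  "comp_exp_growth E C \<longleftrightarrow> (\<exists>v\<in>C. exp_growth_from E v)"

definition pad :: "('a, 'b) monoid_scheme \<Rightarrow> 'a list \<Rightarrow> nat \<Rightarrow> 'a list" where
  "pad G S m = S @ replicate m \<one>\<^bsub>G\<^esub>"

definition pr_comp :: "('a, 'b) monoid_scheme \<Rightarrow> nat \<Rightarrow> 'a list \<Rightarrow> nat \<Rightarrow> 'a list set" where
  "pr_comp G n S m = component (pr_edges G (n + m)) (pad G S m)"

definition exp_nielsen_growth :: "('a, 'b) monoid_scheme \<Rightarrow> bool" where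
  "exp_nielsen_growth G \<longleftrightarrow>
     (\<exists>n S. S \<in> gen_tuples G n \<and> comp_exp_growth (pr_edges G n) (pr_comp G n S 0))"

end

theory Submission
  imports Defs
begin

text \<open>
  Appending S in front of an m-tuple turns every Nielsen move of
  \<open>\<Gamma>\<^sub>m(H)\<close> into a Nielsen move of \<open>\<Gamma>\<^sub>n\<^sub>+\<^sub>m(G)\<close> acting on the last m entries, so \<open>w \<mapsto> S @ w\<close>
  injectively embeds a component of exponential growth of \<open>\<Gamma>\<^sub>m(H)\<close> into \<open>\<Gamma>\<^sub>n\<^sub>+\<^sub>m(G)\<close>; balls can
  only grow, and neighbourhoods stay finite because each vertex has at most \<open>4N\<^sup>2\<close> neighbours.
  The embedded component is the one of \<open>S @ 1\<^sup>m\<close>: since the entries of S generate G, the moves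
  \<open>x\<^sub>k \<mapsto> x\<^sub>k s\<^sup>\<plusminus>\<^sup>1\<close> with s in S carry any tail to any other tail.
\<close>

lemma relpow_map:
  assumes "\<And>a b. (a, b) \<in> E \<Longrightarrow> (f a, f b) \<in> F"
  shows "(a, b) \<in> E ^^ k \<Longrightarrow> (f a, f b) \<in> F ^^ k"
proof (induction k arbitrary: b)
  case 0
  then show ?case by simp
next
  case (Suc k)
  then obtain c where "(a, c) \<in> E ^^ k" "(c, b) \<in> E" by auto
  then show ?case using Suc assms by auto
qed

lemma finite_ball_graph:
  assumes "\<And>x. finite (E `` {x})"
  shows "finite (ball_graph E v r)"
proof -
  have "finite ((E ^^ k) `` {v})" for k
  proof (induction k)
    case 0
    then show ?case by simp
  next
    case (Suc k)
    have "(E ^^ Suc k) `` {v} = (\<Union>x\<in>(E ^^ k) `` {v}. E `` {x})" by auto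
    then show ?case using Suc assms by simp
  qed
  moreover have "ball_graph E v r = (\<Union>k\<le>r. (E ^^ k) `` {v})"
    unfolding ball_graph_def by auto
  ultimately show ?thesis by simp
qed

lemma card_ball_graph_le_embedding:
  assumes "inj f" "\<And>a b. (a, b) \<in> E \<Longrightarrow> (f a, f b) \<in> F" "\<And>x. finite (F `` {x})"
  shows "card (ball_graph E v r) \<le> card (ball_graph F (f v) r)"
proof -
  have "f ` ball_graph E v r \<subseteq> ball_graph F (f v) r"
    using relpow_map[of E f F, OF assms(2)] unfolding ball_graph_def by blast
  then have "card (f ` ball_graph E v r) \<le> card (ball_graph F (f v) r)"
    using finite_ball_graph[OF assms(3)] by (rule card_mono[rotated])
  then show ?thesis
    using card_image[OF inj_on_subset[OF assms(1)]] by simp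
qed

lemma exp_growth_from_embedding:
  assumes "inj f" "\<And>a b. (a, b) \<in> E \<Longrightarrow> (f a, f b) \<in> F" "\<And>x. finite (F `` {x})"
    and "exp_growth_from E v"
  shows "exp_growth_from F (f v)"
proof -
  obtain \<alpha> :: real and R where "\<alpha> > 1" and growth: "\<forall>r\<ge>R. \<alpha> ^ r \<le> card (ball_graph E v r)"
    using assms(4) unfolding exp_growth_from_def by blast
  moreover have "\<forall>r\<ge>R. \<alpha> ^ r \<le> card (ball_graph F (f v) r)"
    using growth card_ball_graph_le_embedding[OF assms(1-3)] by (meson of_nat_le_iff order_trans)
  ultimately show ?thesis unfolding exp_growth_from_def by blast
qed

lemma finite_pr_edges_Image:
  fixes G (structure)
  shows "finite (pr_edges G N `` {xs})"
proof (rule finite_subset)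
  show "pr_edges G N `` {xs} \<subseteq> (\<Union>i<N. \<Union>j<N.
     {xs[j := xs ! j \<otimes> xs ! i], xs[j := xs ! j \<otimes> inv (xs ! i)],
      xs[j := xs ! i \<otimes> xs ! j], xs[j := inv (xs ! i) \<otimes> xs ! j]})"
    unfolding pr_edges_def by auto
qed simp

lemma pr_edgesI:
  fixes G (structure)
  assumes "xs \<in> gen_tuples G N" "ys \<in> gen_tuples G N" "i < N" "j < N" "i \<noteq> j"
    and "ys \<in> {xs[j := xs ! j \<otimes> xs ! i], xs[j := xs ! j \<otimes> inv (xs ! i)],
      xs[j := xs ! i \<otimes> xs ! j], xs[j := inv (xs ! i) \<otimes> xs ! j]}"
  shows "(xs, ys) \<in> pr_edges G N"
  using assms unfolding pr_edges_def by blast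

lemma component_pr_edges_subset_gen_tuples:
  "T \<in> gen_tuples G n \<Longrightarrow> component (pr_edges G n) T \<subseteq> gen_tuples G n"
  unfolding component_def by (auto elim: rtranclE simp: pr_edges_def)

lemma append_gen_tuples:
  assumes "group G" "S \<in> gen_tuples G n" "set u \<subseteq> carrier G" "length u = m"
  shows "S @ u \<in> gen_tuples G (n + m)"
proof -
  interpret group G by fact
  have "carrier G = generate G (set S)"
    using assms(2) unfolding gen_tuples_def by simp
  also have "\<dots> \<subseteq> generate G (set (S @ u))"
    using assms(2,3) mono_generate[of "set S" "set (S @ u)"] unfolding gen_tuples_def by auto
  finally show ?thesis
    using assms generate_incl[of "set (S @ u)"] unfolding gen_tuples_def by auto
qed

lemma pr_edge_mult_generator:
  fixes G (structure)
  assumes "group G" "S \<in> gen_tuples G n" "a \<in> carrier G" "set u \<subseteq> carrier G"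
    and "i < n" "h \<in> {S ! i, inv (S ! i)}"
  shows "(S @ a # u, S @ (a \<otimes> h) # u) \<in> pr_edges G (length (S @ a # u))"
proof (rule pr_edgesI[where i = i and j = n])
  interpret group G by fact
  have "length S = n" "S ! i \<in> carrier G"
    using assms(2,5) unfolding gen_tuples_def by auto
  then show "S @ a # u \<in> gen_tuples G (length (S @ a # u))"
    and "S @ (a \<otimes> h) # u \<in> gen_tuples G (length (S @ a # u))"
    using append_gen_tuples[OF assms(1,2), of "a # u"] assms(3,4,6)
      append_gen_tuples[OF assms(1,2), of "(a \<otimes> h) # u"] by auto
  show "i < length (S @ a # u)" "n < length (S @ a # u)" "i \<noteq> n"
    using assms(5) \<open>length S = n\<close> by auto
  show "S @ (a \<otimes> h) # u \<in> {(S @ a # u)[n := (S @ a # u) ! n \<otimes> (S @ a # u) ! i],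
      (S @ a # u)[n := (S @ a # u) ! n \<otimes> inv ((S @ a # u) ! i)],
      (S @ a # u)[n := (S @ a # u) ! i \<otimes> (S @ a # u) ! n],
      (S @ a # u)[n := inv ((S @ a # u) ! i) \<otimes> (S @ a # u) ! n]}"
    using assms(5,6) \<open>length S = n\<close> by (auto simp: nth_append list_update_append)
qed

lemma pr_edges_mult_generate:
  fixes G (structure)
  assumes "group G" "S \<in> gen_tuples G n" "g \<in> generate G (set S)"
  shows "a \<in> carrier G \<Longrightarrow> set u \<subseteq> carrier G \<Longrightarrow>
    (S @ a # u, S @ (a \<otimes> g) # u) \<in> (pr_edges G (length (S @ a # u)))\<^sup>*"
  using assms(3)
proof (induction arbitrary: a rule: generate.induct)
  case one
  then show ?case using group.is_monoid[OF assms(1)] by simp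
next
  case (incl h)
  have "length S = n" using assms(2) unfolding gen_tuples_def by simp
  with incl.hyps obtain i where "i < n" "h = S ! i" by (auto simp: in_set_conv_nth)
  with pr_edge_mult_generator[OF assms(1,2) incl.prems]
  have "(S @ a # u, S @ (a \<otimes> h) # u) \<in> pr_edges G (length (S @ a # u))" by blast
  then show ?case ..
next
  case (inv h)
  have "length S = n" using assms(2) unfolding gen_tuples_def by simp
  with inv.hyps obtain i where "i < n" "h = S ! i" by (auto simp: in_set_conv_nth)
  with pr_edge_mult_generator[OF assms(1,2) inv.prems]
  have "(S @ a # u, S @ (a \<otimes> inv h) # u) \<in> pr_edges G (length (S @ a # u))" by blast
  then show ?case ..
next
  case (eng g\<^sub>1 g\<^sub>2)
  interpret group G by fact
  have "g\<^sub>1 \<in> carrier G" "g\<^sub>2 \<in> carrier G"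
    using eng.hyps generate_incl assms(2) unfolding gen_tuples_def by auto
  then have "a \<otimes> g\<^sub>1 \<in> carrier G" "a \<otimes> g\<^sub>1 \<otimes> g\<^sub>2 = a \<otimes> (g\<^sub>1 \<otimes> g\<^sub>2)"
    using eng.prems(1) by (simp_all add: m_assoc)
  then show ?case
    using eng.IH(1)[OF eng.prems] eng.IH(2)[OF _ eng.prems(2), of "a \<otimes> g\<^sub>1"]
    by (metis length_Cons length_append rtrancl_trans)
qed

lemma pr_edges_replace_tail:
  fixes G (structure)
  assumes "group G" "S \<in> gen_tuples G n"
    and "set u \<subseteq> carrier G" "set w \<subseteq> carrier G" "length u = length w"
  shows "(S @ u, S @ w) \<in> (pr_edges G (length (S @ u)))\<^sup>*"
  using assms(2-5)
proof (induction u arbitrary: S n w)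
  case Nil
  then show ?case by simp
next
  case (Cons a u)
  interpret group G by fact
  obtain b w' where w: "w = b # w'" using Cons.prems(4) by (cases w) auto
  have "a \<in> carrier G" "b \<in> carrier G" using Cons.prems(2,3) w by auto
  then have "inv a \<otimes> b \<in> generate G (set S)"
    using Cons.prems(1) unfolding gen_tuples_def by simp
  from pr_edges_mult_generate[OF assms(1) Cons.prems(1) this, of a u]
  have "(S @ a # u, S @ b # u) \<in> (pr_edges G (length (S @ a # u)))\<^sup>*"
    using \<open>a \<in> carrier G\<close> \<open>b \<in> carrier G\<close> Cons.prems(2) by (simp add: m_assoc[symmetric])
  moreover have "S @ [b] \<in> gen_tuples G (n + 1)"
    using append_gen_tuples[OF assms(1) Cons.prems(1), of "[b]"] \<open>b \<in> carrier G\<close> by simp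
  from Cons.IH[OF this] have "(S @ b # u, S @ b # w') \<in> (pr_edges G (length (S @ a # u)))\<^sup>*"
    using Cons.prems(2-4) w by simp
  ultimately show ?case using w by simp
qed

lemma pr_edges_subgroup_append:
  fixes G (structure)
  assumes "group G" "subgroup H G" "S \<in> gen_tuples G n"
    and "(w, w') \<in> pr_edges (G\<lparr>carrier := H\<rparr>) m"
  shows "(S @ w, S @ w') \<in> pr_edges G (n + m)"
proof -
  interpret group G by fact
  from assms(4) obtain i j where ij: "i < m" "j < m" "i \<noteq> j"
    and w: "w \<in> gen_tuples (G\<lparr>carrier := H\<rparr>) m" "w' \<in> gen_tuples (G\<lparr>carrier := H\<rparr>) m"
    and move: "w' \<in> {w[j := w ! j \<otimes> w ! i], w[j := w ! j \<otimes> inv\<^bsub>G\<lparr>carrier := H\<rparr>\<^esub> (w ! i)],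
         w[j := w ! i \<otimes> w ! j], w[j := inv\<^bsub>G\<lparr>carrier := H\<rparr>\<^esub> (w ! i) \<otimes> w ! j]}"
    unfolding pr_edges_def by auto
  have "set w \<subseteq> H" "set w' \<subseteq> H" "length w = m" "length w' = m" "length S = n"
    using w assms(3) unfolding gen_tuples_def by auto
  show ?thesis
  proof (rule pr_edgesI[where i = "n + i" and j = "n + j"])
    show "S @ w \<in> gen_tuples G (n + m)" "S @ w' \<in> gen_tuples G (n + m)"
      using append_gen_tuples[OF assms(1,3)] subgroup.subset[OF assms(2)]
        \<open>set w \<subseteq> H\<close> \<open>set w' \<subseteq> H\<close> \<open>length w = m\<close> \<open>length w' = m\<close> by auto
    show "n + i < n + m" "n + j < n + m" "n + i \<noteq> n + j"
      using ij by auto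
    have "w ! i \<in> H" using ij \<open>set w \<subseteq> H\<close> \<open>length w = m\<close> by auto
    then have "inv\<^bsub>G\<lparr>carrier := H\<rparr>\<^esub> (w ! i) = inv (w ! i)"
      using assms(2) by simp
    then show "S @ w' \<in> {(S @ w)[n + j := (S @ w) ! (n + j) \<otimes> (S @ w) ! (n + i)],
        (S @ w)[n + j := (S @ w) ! (n + j) \<otimes> inv ((S @ w) ! (n + i))],
        (S @ w)[n + j := (S @ w) ! (n + i) \<otimes> (S @ w) ! (n + j)],
        (S @ w)[n + j := inv ((S @ w) ! (n + i)) \<otimes> (S @ w) ! (n + j)]}"
      using move \<open>length S = n\<close> by (auto simp: nth_append list_update_append)
  qed
qed

lemma comp_exp_growth_pr_comp_of_subgroup:
  fixes G (structure)
  assumes "group G" "subgroup H G" "S \<in> gen_tuples G n"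
    and "T \<in> gen_tuples (G\<lparr>carrier := H\<rparr>) m"
    and "comp_exp_growth (pr_edges (G\<lparr>carrier := H\<rparr>) m) (component (pr_edges (G\<lparr>carrier := H\<rparr>) m) T)"
  shows "comp_exp_growth (pr_edges G (n + m)) (pr_comp G n S m)"
proof -
  interpret group G by fact
  obtain v where v: "v \<in> component (pr_edges (G\<lparr>carrier := H\<rparr>) m) T"
    and growth: "exp_growth_from (pr_edges (G\<lparr>carrier := H\<rparr>) m) v"
    using assms(5) unfolding comp_exp_growth_def by blast
  have "v \<in> gen_tuples (G\<lparr>carrier := H\<rparr>) m"
    using component_pr_edges_subset_gen_tuples[OF assms(4)] v by blast
  then have "set v \<subseteq> carrier G" "length v = m" "length S = n"
    using subgroup.subset[OF assms(2)] assms(3) unfolding gen_tuples_def by auto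
  then have "(pad G S m, S @ v) \<in> (pr_edges G (n + m))\<^sup>*"
    using pr_edges_replace_tail[OF assms(1,3), of "replicate m \<one>" v]
    unfolding pad_def by (auto simp: set_replicate_conv_if)
  then have "S @ v \<in> pr_comp G n S m"
    unfolding pr_comp_def component_def by simp
  moreover have "inj ((@) S)" by (simp add: inj_def)
  then have "exp_growth_from (pr_edges G (n + m)) (S @ v)"
    using exp_growth_from_embedding[of "(@) S", OF _ pr_edges_subgroup_append[OF assms(1-3)]
        finite_pr_edges_Image growth] by blast
  ultimately show ?thesis unfolding comp_exp_growth_def by blast
qed

theorem proposition3p4:
  fixes G :: "('a, 'b) monoid_scheme" and H :: "'a set" and m n :: nat and S :: "'a list"
  assumes "group G" and "subgroup H G"
    and "fin_gen G" and "fin_gen (G\<lparr>carrier := H\<rparr>)"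
    and "\<exists>T \<in> gen_tuples (G\<lparr>carrier := H\<rparr>) m.
           comp_exp_growth (pr_edges (G\<lparr>carrier := H\<rparr>) m)
             (component (pr_edges (G\<lparr>carrier := H\<rparr>) m) T)"
    and "S \<in> gen_tuples G n"
  shows "comp_exp_growth (pr_edges G (n + m)) (pr_comp G n S m)
    \<and> (exp_nielsen_growth (G\<lparr>carrier := H\<rparr>) \<longrightarrow> exp_nielsen_growth G)"
proof (intro conjI impI)
  show "comp_exp_growth (pr_edges G (n + m)) (pr_comp G n S m)"
    using comp_exp_growth_pr_comp_of_subgroup[OF assms(1,2,6)] assms(5) by blast
next
  assume "exp_nielsen_growth (G\<lparr>carrier := H\<rparr>)"
  then obtain k T where "T \<in> gen_tuples (G\<lparr>carrier := H\<rparr>) k"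
    and "comp_exp_growth (pr_edges (G\<lparr>carrier := H\<rparr>) k) (pr_comp (G\<lparr>carrier := H\<rparr>) k T 0)"
    unfolding exp_nielsen_growth_def by blast
  moreover have "pr_comp (G\<lparr>carrier := H\<rparr>) k T 0 = component (pr_edges (G\<lparr>carrier := H\<rparr>) k) T"
    unfolding pr_comp_def pad_def by simp
  ultimately have "comp_exp_growth (pr_edges G (n + k)) (pr_comp G n S k)"
    using comp_exp_growth_pr_comp_of_subgroup[OF assms(1,2,6)] by simp
  moreover have "pr_comp G n S k = pr_comp G (n + k) (pad G S k) 0"
    unfolding pr_comp_def pad_def by simp
  moreover have "pad G S k \<in> gen_tuples G (n + k)"
    using append_gen_tuples[OF assms(1,6)] group.is_monoid[OF assms(1)]
    unfolding pad_def by (auto simp: set_replicate_conv_if)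
  ultimately show "exp_nielsen_growth G"
    unfolding exp_nielsen_growth_def by auto
qed

end
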